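(* Let $G$ be a finite group and $\phi:G\to G$ an endomorphism. Let $W$ be the complex vector space of complex-valued class functions on $G$ (functions constant on ordinary conjugacy classes), and let $B:W\to W$ be the linear map $B(h)=h\circ\phi$. Then $R(\phi)=\mathrm{Tr}\,B$.
   Context: Two elements $\alpha,\alpha'\in G$ are $\phi$-conjugate if $\alpha'=\gamma\alpha\phi(\gamma)^{-1}$ for some $\gamma\in G$; the Reidemeister number $R(\phi)$ is the number of $\phi$-conjugacy classes. Since $\phi$ maps conjugate elements to conjugate elements, $h\circ\phi$ is again a class function. *)

theory Defs
  imports "HOL-Algebra.Algebra" "HOL-Library.Function_Algebras"
begin

definition cscale :: "complex \<Rightarrow> ('a \<Rightarrow> complex) \<Rightarrow> ('a \<Rightarrow> complex)" where
  "cscale c h = (\<lambda>x. c * h x)"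

definition class_functions :: "('a, 'b) monoid_scheme \<Rightarrow> ('a \<Rightarrow> complex) set" where
  "class_functions G = {h. (\<forall>x\<in>carrier G. \<forall>g\<in>carrier G. h (g \<otimes>\<^bsub>G\<^esub> x \<otimes>\<^bsub>G\<^esub> inv\<^bsub>G\<^esub> g) = h x)
                          \<and> (\<forall>x. x \<notin> carrier G \<longrightarrow> h x = 0)}"

definition is_basis_of :: "('a \<Rightarrow> complex) set \<Rightarrow> ('a \<Rightarrow> complex) set \<Rightarrow> bool" where
  "is_basis_of W b \<longleftrightarrow> b \<subseteq> W \<and> \<not> module.dependent cscale b \<and> module.span cscale b = W"

text \<open>Trace of a linear endomorphism f of a finite-dimensional subspace W:
  sum of diagonal coefficients of the matrix of f in a (chosen) basis of W.\<close>
definition lin_trace :: "('a \<Rightarrow> complex) set \<Rightarrow> (('a \<Rightarrow> complex) \<Rightarrow> ('a \<Rightarrow> complex)) \<Rightarrow> complex" where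
  "lin_trace W f = (let b = (SOME b. is_basis_of W b) in
                     \<Sum>v\<in>b. module.representation cscale b (f v) v)"

definition precomp :: "('a, 'b) monoid_scheme \<Rightarrow> ('a \<Rightarrow> 'a) \<Rightarrow> ('a \<Rightarrow> complex) \<Rightarrow> ('a \<Rightarrow> complex)" where
  "precomp G \<phi> h = (\<lambda>x. if x \<in> carrier G then h (\<phi> x) else 0)"

definition twisted_conj_rel :: "('a, 'b) monoid_scheme \<Rightarrow> ('a \<Rightarrow> 'a) \<Rightarrow> ('a \<times> 'a) set" where
  "twisted_conj_rel G \<phi> = {(a, a'). a \<in> carrier G \<and> a' \<in> carrier G \<and>
      (\<exists>\<gamma>\<in>carrier G. a' = \<gamma> \<otimes>\<^bsub>G\<^esub> a \<otimes>\<^bsub>G\<^esub> inv\<^bsub>G\<^esub> (\<phi> \<gamma>))}"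

definition reidemeister_number :: "('a, 'b) monoid_scheme \<Rightarrow> ('a \<Rightarrow> 'a) \<Rightarrow> nat" where
  "reidemeister_number G \<phi> = card (carrier G // twisted_conj_rel G \<phi>)"

end

theory Submission
  imports Defs "HOL-Library.Indicator_Function"
begin

text \<open>The indicator functions of the conjugacy classes form a basis of the class functions, and
  the diagonal coefficient of \<open>B\<close> at the indicator of a class \<open>C\<close> is the value of
  \<open>1\<^sub>C \<circ> \<phi>\<close> at any point of \<open>C\<close>, i.e. \<open>1\<close> if \<open>\<phi>\<close> maps \<open>C\<close> into itself and \<open>0\<close> otherwise.
  So \<open>Tr B\<close> counts the \<open>\<phi>\<close>-invariant classes.

  The \<open>\<phi>\<close>-conjugacy classes are the orbits of the twisted action \<open>g \<cdot> x = g x \<phi>(g)\<^sup>-\<^sup>1\<close>,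
  so by Burnside's lemma \<open>R(\<phi>) |G|\<close> is the sum over \<open>g\<close> of the number of \<open>a\<close> with
  \<open>g a = a \<phi>(g)\<close>. This set is empty unless \<open>\<phi>(g) = h g h\<^sup>-\<^sup>1\<close> for some \<open>h\<close>, and then
  \<open>a \<mapsto> a h\<close> maps it onto the centraliser of \<open>g\<close>. Since the centraliser orders summed over a
  class give \<open>|G|\<close>, the sum is \<open>|G|\<close> times the number of \<open>\<phi>\<close>-invariant classes.\<close>

lemma sum_apply: "(\<Sum>a\<in>A. f a) x = (\<Sum>a\<in>A. f a x)"
  by (induct A rule: infinite_finite_induct) auto

lemma inj_on_indicator: "inj_on (indicator :: 'a set \<Rightarrow> 'a \<Rightarrow> 'b::zero_neq_one) S"
proof (rule inj_onI)
  fix A B :: "'a set"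
  assume "A \<in> S" "B \<in> S" "indicator A = (indicator B :: 'a \<Rightarrow> 'b)"
  then have "(x \<in> A) = (x \<in> B)" for x
    by (metis indicator_eq_1_iff)
  then show "A = B" by blast
qed

interpretation fun_vs: vector_space cscale
  by unfold_locales (simp_all add: cscale_def fun_eq_iff distrib_left distrib_right)

lemma class_functions_subspace: "fun_vs.subspace (class_functions G)"
  unfolding fun_vs.subspace_def class_functions_def by (simp add: cscale_def)

lemma (in Modules.module) representation_sum_scale:
  assumes "independent B" and "\<And>i. i \<in> I \<Longrightarrow> x i \<in> span B"
  shows "representation B (\<Sum>i\<in>I. c i *s x i) w = (\<Sum>i\<in>I. c i * representation B (x i) w)"
proof -
  have "representation B (\<Sum>i\<in>I. c i *s x i) = (\<lambda>b. \<Sum>i\<in>I. representation B (c i *s x i) b)"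
    using assms by (intro representation_sum) (simp_all add: span_scale)
  then show ?thesis
    using assms by (simp add: representation_scale)
qed

lemma (in Modules.module) trace_independent_of_basis:
  assumes B: "independent B" "finite B" and E: "independent E" "finite E"
    and span_eq: "span B = span E"
    and f_add: "\<And>x y. f (x + y) = f x + f y" and f_scale: "\<And>c x. f (c *s x) = c *s f x"
    and f_span: "\<And>x. x \<in> span E \<Longrightarrow> f x \<in> span E"
  shows "(\<Sum>v\<in>B. representation B (f v) v) = (\<Sum>u\<in>E. representation E (f u) u)"
proof -
  have "f 0 = 0"
    using f_scale[of 0 0] by simp
  then have f_sum: "f (\<Sum>i\<in>I. g i) = (\<Sum>i\<in>I. f (g i))" for I and g :: "'c \<Rightarrow> 'b"
    by (induct I rule: infinite_finite_induct) (simp_all add: f_add)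
  have f_E: "f u \<in> span B" if "u \<in> E" for u
    using f_span span_eq that by (simp add: span_base)
  have B_E: "v \<in> span E" if "v \<in> B" for v
    using span_eq that by (metis span_base)
  have diag_B: "representation B (f v) v = (\<Sum>u\<in>E. representation E v u * representation B (f u) v)"
    if "v \<in> B" for v
  proof -
    have "f v = f (\<Sum>u\<in>E. representation E v u *s u)"
      using sum_representation_eq[OF E(1) B_E[OF that] E(2) order_refl] by simp
    also have "\<dots> = (\<Sum>u\<in>E. representation E v u *s f u)"
      by (simp add: f_sum f_scale)
    finally have "f v = (\<Sum>u\<in>E. representation E v u *s f u)" .
    then have "representation B (f v) v = representation B (\<Sum>u\<in>E. representation E v u *s f u) v"
      by (rule arg_cong)
    also have "\<dots> = (\<Sum>u\<in>E. representation E v u * representation B (f u) v)"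
      using representation_sum_scale[OF B(1) f_E] .
    finally show ?thesis .
  qed
  have "(\<Sum>v\<in>B. representation B (f v) v)
      = (\<Sum>v\<in>B. \<Sum>u\<in>E. representation E v u * representation B (f u) v)"
    using diag_B by (rule sum.cong[OF refl])
  also have "\<dots> = (\<Sum>u\<in>E. \<Sum>v\<in>B. representation B (f u) v * representation E v u)"
    by (subst sum.swap) (simp add: mult.commute)
  also have "\<dots> = (\<Sum>u\<in>E. representation E (\<Sum>v\<in>B. representation B (f u) v *s v) u)"
    using representation_sum_scale[OF E(1), of B "\<lambda>v. v"] B_E by simp
  also have "\<dots> = (\<Sum>u\<in>E. representation E (f u) u)"
  proof (rule sum.cong[OF refl])
    fix u assume "u \<in> E"
    from sum_representation_eq[OF B(1) f_E[OF this] B(2) order_refl]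
    show "representation E (\<Sum>v\<in>B. representation B (f u) v *s v) u = representation E (f u) u"
      by (rule arg_cong)
  qed
  finally show ?thesis .
qed

lemma lin_trace_eq_sum_representation:
  assumes E: "is_basis_of W E" "finite E"
    and f_add: "\<And>x y. f (x + y) = f x + f y" and f_scale: "\<And>c x. f (cscale c x) = cscale c (f x)"
    and f_W: "\<And>x. x \<in> W \<Longrightarrow> f x \<in> W"
  shows "lin_trace W f = (\<Sum>u\<in>E. fun_vs.representation E (f u) u)"
proof -
  define B where "B = (SOME B. is_basis_of W B)"
  have B: "is_basis_of W B"
    unfolding B_def using E(1) by (rule someI)
  then have "finite B"
    using fun_vs.independent_span_bound[OF E(2)] E(1) unfolding is_basis_of_def by blast
  with B E have "(\<Sum>v\<in>B. fun_vs.representation B (f v) v) = (\<Sum>u\<in>E. fun_vs.representation E (f u) u)"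
    by (intro fun_vs.trace_independent_of_basis) (auto simp: is_basis_of_def f_add f_scale f_W)
  then show ?thesis
    unfolding lin_trace_def B_def[symmetric] Let_def .
qed

lemma group_actionI:
  fixes G (structure)
  assumes G: "group G"
    and closed: "\<And>g x. g \<in> carrier G \<Longrightarrow> x \<in> E \<Longrightarrow> act g x \<in> E"
    and one: "\<And>x. x \<in> E \<Longrightarrow> act \<one> x = x"
    and mult: "\<And>g h x. g \<in> carrier G \<Longrightarrow> h \<in> carrier G \<Longrightarrow> x \<in> E \<Longrightarrow> act (g \<otimes> h) x = act g (act h x)"
  shows "group_action G E (\<lambda>g. \<lambda>x\<in>E. act g x)"
proof -
  interpret group G by (rule G)
  have bij: "(\<lambda>x\<in>E. act g x) \<in> Bij E" if g: "g \<in> carrier G" for g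
  proof -
    have "bij_betw (act g) E E"
      using g closed one mult[of "inv g" g] mult[of g "inv g"]
      by (intro bij_betwI[where g = "act (inv g)"]) (auto simp: Pi_def)
    then show ?thesis
      unfolding Bij_def by (simp add: bij_betw_restrict_eq)
  qed
  have "(\<lambda>g. \<lambda>x\<in>E. act g x) \<in> hom G (BijGroup E)"
  proof (rule homI)
    show "(\<lambda>x\<in>E. act g x) \<in> carrier (BijGroup E)" if "g \<in> carrier G" for g
      using bij[OF that] unfolding BijGroup_def by simp
    show "(\<lambda>x\<in>E. act (g \<otimes> h) x) = (\<lambda>x\<in>E. act g x) \<otimes>\<^bsub>BijGroup E\<^esub> (\<lambda>x\<in>E. act h x)"
      if "g \<in> carrier G" "h \<in> carrier G" for g h
      using that bij closed mult unfolding BijGroup_def compose_def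
      by (auto intro!: restrict_ext)
  qed
  then show ?thesis
    unfolding group_action_def group_hom_def
    by (simp add: G group_BijGroup group_hom_axioms.intro)
qed

definition conjugation :: "('a, 'b) monoid_scheme \<Rightarrow> 'a \<Rightarrow> 'a \<Rightarrow> 'a" where
  "conjugation G g = (\<lambda>x\<in>carrier G. g \<otimes>\<^bsub>G\<^esub> x \<otimes>\<^bsub>G\<^esub> inv\<^bsub>G\<^esub> g)"

definition conj_classes :: "('a, 'b) monoid_scheme \<Rightarrow> 'a set set" where
  "conj_classes G = orbits G (carrier G) (conjugation G)"

definition twisted_conjugation :: "('a, 'b) monoid_scheme \<Rightarrow> ('a \<Rightarrow> 'a) \<Rightarrow> 'a \<Rightarrow> 'a \<Rightarrow> 'a" where
  "twisted_conjugation G \<phi> g = (\<lambda>x\<in>carrier G. g \<otimes>\<^bsub>G\<^esub> x \<otimes>\<^bsub>G\<^esub> inv\<^bsub>G\<^esub> (\<phi> g))"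

context group
begin

lemma group_action_conjugation: "group_action G (carrier G) (conjugation G)"
  unfolding conjugation_def by (rule action_by_conjugation)

lemma orbit_conjugation:
  "x \<in> carrier G \<Longrightarrow> orbit G (conjugation G) x = {g \<otimes> x \<otimes> inv g | g. g \<in> carrier G}"
  unfolding orbit_def conjugation_def by auto

lemma orbit_conjugation_in_conj_classes: "x \<in> carrier G \<Longrightarrow> orbit G (conjugation G) x \<in> conj_classes G"
  unfolding conj_classes_def orbits_def by blast

lemma in_orbit_conjugation_self: "x \<in> carrier G \<Longrightarrow> x \<in> orbit G (conjugation G) x"
  using group_action.orbit_refl[OF group_action_conjugation] .

lemma conj_class_subset_carrier: "C \<in> conj_classes G \<Longrightarrow> C \<subseteq> carrier G"
  using group_action.orbits_coverture[OF group_action_conjugation]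
  unfolding conj_classes_def by blast

lemma conj_class_eq_orbit: "C \<in> conj_classes G \<Longrightarrow> x \<in> C \<Longrightarrow> C = orbit G (conjugation G) x"
  using group_action.disjoint_union[OF group_action_conjugation, of C "orbit G (conjugation G) x"]
    orbit_conjugation_in_conj_classes conj_class_subset_carrier in_orbit_conjugation_self
  unfolding conj_classes_def by blast

lemma conj_class_eqI: "C \<in> conj_classes G \<Longrightarrow> D \<in> conj_classes G \<Longrightarrow> x \<in> C \<Longrightarrow> x \<in> D \<Longrightarrow> C = D"
  using conj_class_eq_orbit by blast

lemma conj_class_nonempty: "C \<in> conj_classes G \<Longrightarrow> C \<noteq> {}"
  unfolding conj_classes_def orbits_def using in_orbit_conjugation_self by blast

lemma conj_class_closed:
  assumes "C \<in> conj_classes G" "x \<in> C" "g \<in> carrier G"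
  shows "g \<otimes> x \<otimes> inv g \<in> C"
  using assms conj_class_eq_orbit[OF assms(1,2)] orbit_conjugation conj_class_subset_carrier by blast

lemma class_function_const_on_conj_class:
  assumes w: "w \<in> class_functions G" and C: "C \<in> conj_classes G" "x \<in> C" "y \<in> C"
  shows "w y = w x"
proof -
  have "x \<in> carrier G"
    using C conj_class_subset_carrier by blast
  moreover obtain g where "g \<in> carrier G" "y = g \<otimes> x \<otimes> inv g"
    using C conj_class_eq_orbit orbit_conjugation calculation by blast
  ultimately show ?thesis
    using w unfolding class_functions_def by simp
qed

lemma indicator_conj_class_in_class_functions:
  assumes C: "C \<in> conj_classes G"
  shows "indicator C \<in> class_functions G"
proof -
  have "g \<otimes> x \<otimes> inv g \<in> C \<longleftrightarrow> x \<in> C" if "x \<in> carrier G" "g \<in> carrier G" for x g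
  proof
    assume "g \<otimes> x \<otimes> inv g \<in> C"
    moreover have "g \<otimes> x \<otimes> inv g \<in> orbit G (conjugation G) x"
      using that orbit_conjugation by blast
    ultimately have "C = orbit G (conjugation G) x"
      using C conj_class_eqI orbit_conjugation_in_conj_classes that(1) by blast
    then show "x \<in> C"
      using in_orbit_conjugation_self that(1) by blast
  qed (use C conj_class_closed that in blast)
  then show ?thesis
    using conj_class_subset_carrier[OF C] unfolding class_functions_def by (auto simp: indicator_def)
qed

end

locale finite_group = group +
  assumes finite_carrier: "finite (carrier G)"
begin

lemma finite_conj_classes: "finite (conj_classes G)"
  using finite_carrier conj_class_subset_carrier by (metis Pow_iff finite_Pow_iff finite_subset subsetI)

lemma conj_class_indicator_combination_apply:
  assumes "C \<in> conj_classes G" "x \<in> C"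
  shows "(\<Sum>D\<in>conj_classes G. cscale (c D) (indicator D)) x = c C"
proof -
  have "cscale (c D) (indicator D) x = (if D = C then c D else 0)" if "D \<in> conj_classes G" for D
  proof (cases "D = C")
    case False
    then have "x \<notin> D"
      using conj_class_eqI[OF that assms(1) _ assms(2)] by blast
    then show ?thesis
      using False by (simp add: cscale_def)
  qed (simp add: cscale_def assms(2))
  then have "(\<Sum>D\<in>conj_classes G. cscale (c D) (indicator D)) x
      = (\<Sum>D\<in>conj_classes G. if D = C then c D else 0)"
    unfolding sum_apply by (rule sum.cong[OF refl])
  also have "\<dots> = c C"
    using assms finite_conj_classes by simp
  finally show ?thesis .
qed

lemma class_function_expansion:
  assumes w: "w \<in> class_functions G"
  shows "w = (\<Sum>D\<in>conj_classes G. cscale (w (SOME x. x \<in> D)) (indicator D))"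
proof
  fix x
  show "w x = (\<Sum>D\<in>conj_classes G. cscale (w (SOME x. x \<in> D)) (indicator D)) x"
  proof (cases "x \<in> carrier G")
    case True
    let ?C = "orbit G (conjugation G) x"
    have C: "?C \<in> conj_classes G" "x \<in> ?C"
      using True orbit_conjugation_in_conj_classes in_orbit_conjugation_self by auto
    then have "(SOME y. y \<in> ?C) \<in> ?C"
      by (meson someI)
    then show ?thesis
      using conj_class_indicator_combination_apply[OF C] class_function_const_on_conj_class[OF w C]
      by simp
  next
    case False
    then have "indicator D x = (0 :: complex)" if "D \<in> conj_classes G" for D
      using conj_class_subset_carrier[OF that] by (meson indicator_simps(2) subsetD)
    then show ?thesis
      using w False by (simp add: class_functions_def sum_apply cscale_def)
  qed
qed

lemma span_conj_class_indicators: "fun_vs.span (indicator ` conj_classes G) = class_functions G"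
proof
  show "fun_vs.span (indicator ` conj_classes G) \<subseteq> class_functions G"
    using fun_vs.span_minimal[OF _ class_functions_subspace] indicator_conj_class_in_class_functions
    by blast
  show "class_functions G \<subseteq> fun_vs.span (indicator ` conj_classes G)"
  proof
    fix w assume "w \<in> class_functions G"
    moreover have "(\<Sum>D\<in>conj_classes G. cscale (w (SOME x. x \<in> D)) (indicator D))
        \<in> fun_vs.span (indicator ` conj_classes G)"
      by (intro fun_vs.span_sum fun_vs.span_scale fun_vs.span_base) auto
    ultimately show "w \<in> fun_vs.span (indicator ` conj_classes G)"
      using class_function_expansion by metis
  qed
qed

lemma independent_conj_class_indicators: "fun_vs.independent (indicator ` conj_classes G)"
proof (rule fun_vs.independent_if_scalars_zero)
  show "finite (indicator ` conj_classes G)"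
    using finite_conj_classes by blast
  fix c and u :: "'a \<Rightarrow> complex"
  assume zero: "(\<Sum>v\<in>indicator ` conj_classes G. cscale (c v) v) = 0"
    and u: "u \<in> indicator ` conj_classes G"
  then obtain C x where C: "C \<in> conj_classes G" "u = indicator C" "x \<in> C"
    using conj_class_nonempty by blast
  have "c u = (\<Sum>D\<in>conj_classes G. cscale (c (indicator D)) (indicator D)) x"
    using conj_class_indicator_combination_apply[OF C(1,3)] C(2) by simp
  also have "\<dots> = 0"
    using zero by (simp add: sum.reindex[OF inj_on_indicator])
  finally show "c u = 0" .
qed

lemma basis_conj_class_indicators: "is_basis_of (class_functions G) (indicator ` conj_classes G)"
  unfolding is_basis_of_def
  using span_conj_class_indicators independent_conj_class_indicators
    indicator_conj_class_in_class_functions by auto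

lemma representation_conj_class_indicators:
  assumes w: "w \<in> class_functions G" and C: "C \<in> conj_classes G" "x \<in> C"
  shows "fun_vs.representation (indicator ` conj_classes G) w (indicator C) = w x"
proof -
  let ?r = "fun_vs.representation (indicator ` conj_classes G) w"
  have "w = (\<Sum>u\<in>indicator ` conj_classes G. cscale (?r u) u)"
    using fun_vs.sum_representation_eq[OF independent_conj_class_indicators, of w]
      w span_conj_class_indicators finite_conj_classes by simp
  also have "\<dots> = (\<Sum>D\<in>conj_classes G. cscale (?r (indicator D)) (indicator D))"
    by (simp add: sum.reindex[OF inj_on_indicator])
  finally have "w x = (\<Sum>D\<in>conj_classes G. cscale (?r (indicator D)) (indicator D)) x"
    by simp
  then show ?thesis
    using conj_class_indicator_combination_apply[OF C] by simp
qed

end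

lemma precomp_add: "precomp G \<phi> (h + k) = precomp G \<phi> h + precomp G \<phi> k"
  unfolding precomp_def by (simp add: fun_eq_iff)

lemma precomp_cscale: "precomp G \<phi> (cscale c h) = cscale c (precomp G \<phi> h)"
  unfolding precomp_def cscale_def by (simp add: fun_eq_iff)

locale group_endomorphism = group +
  fixes \<phi>
  assumes endo: "\<phi> \<in> hom G G"
begin

sublocale group_hom G G \<phi>
  unfolding group_hom_def group_hom_axioms_def using endo is_group by blast

lemma precomp_in_class_functions: "h \<in> class_functions G \<Longrightarrow> precomp G \<phi> h \<in> class_functions G"
  unfolding class_functions_def precomp_def by auto

lemma group_action_twisted_conjugation: "group_action G (carrier G) (twisted_conjugation G \<phi>)"
  unfolding twisted_conjugation_def
proof (rule group_actionI[OF is_group])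
  show "g \<otimes> h \<otimes> x \<otimes> inv (\<phi> (g \<otimes> h)) = g \<otimes> (h \<otimes> x \<otimes> inv (\<phi> h)) \<otimes> inv (\<phi> g)"
    if "g \<in> carrier G" "h \<in> carrier G" "x \<in> carrier G" for g h x
    using that by (simp add: inv_mult_group m_assoc)
qed simp_all

lemma quotient_twisted_conj_rel:
  "carrier G // twisted_conj_rel G \<phi> = orbits G (carrier G) (twisted_conjugation G \<phi>)"
proof -
  have "orbit G (twisted_conjugation G \<phi>) x = twisted_conj_rel G \<phi> `` {x}" if "x \<in> carrier G" for x
    using that unfolding orbit_def twisted_conjugation_def twisted_conj_rel_def by auto
  then show ?thesis
    unfolding quotient_def orbits_def by auto
qed

lemma endo_maps_conj_class_iff:
  assumes C: "C \<in> conj_classes G" "x \<in> C"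
  shows "\<phi> x \<in> C \<longleftrightarrow> \<phi> ` C \<subseteq> C"
proof
  assume "\<phi> x \<in> C"
  have x: "x \<in> carrier G"
    using C conj_class_subset_carrier by blast
  show "\<phi> ` C \<subseteq> C"
  proof
    fix y assume "y \<in> \<phi> ` C"
    then obtain z where z: "z \<in> C" and y: "y = \<phi> z"
      by blast
    have "z \<in> orbit G (conjugation G) x"
      using conj_class_eq_orbit[OF C] z by simp
    then obtain g where g: "g \<in> carrier G" and "z = g \<otimes> x \<otimes> inv g"
      unfolding orbit_conjugation[OF x] by blast
    then have "y = \<phi> g \<otimes> \<phi> x \<otimes> inv (\<phi> g)"
      using x y by simp
    then show "y \<in> C"
      using conj_class_closed[OF C(1) \<open>\<phi> x \<in> C\<close>] g by simp
  qed
next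
  assume "\<phi> ` C \<subseteq> C"
  then show "\<phi> x \<in> C"
    using C(2) by blast
qed

lemma twisted_conjugation_fixes_iff:
  assumes "g \<in> carrier G" "a \<in> carrier G"
  shows "twisted_conjugation G \<phi> g a = a \<longleftrightarrow> g \<otimes> a = a \<otimes> \<phi> g"
  using assms inv_solve_right'[of a "g \<otimes> a" "\<phi> g"] by (simp add: twisted_conjugation_def)

lemma card_invariants_twisted_conjugation:
  assumes g: "g \<in> carrier G"
  shows "card (invariants (carrier G) (twisted_conjugation G \<phi>) g)
       = (if \<phi> g \<in> orbit G (conjugation G) g then card (stabilizer G (conjugation G) g) else 0)"
proof -
  have invariants: "invariants (carrier G) (twisted_conjugation G \<phi>) g = {a \<in> carrier G. g \<otimes> a = a \<otimes> \<phi> g}"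
    unfolding invariants_def using twisted_conjugation_fixes_iff[OF g] by auto
  have stabilizer: "stabilizer G (conjugation G) g = {s \<in> carrier G. s \<otimes> g = g \<otimes> s}"
    unfolding stabilizer_def conjugation_def using g inv_solve_right' by auto
  show ?thesis
  proof (cases "\<phi> g \<in> orbit G (conjugation G) g")
    case True
    then obtain h where h: "h \<in> carrier G" "\<phi> g = h \<otimes> g \<otimes> inv h"
      using orbit_conjugation[OF g] by auto
    have "g \<otimes> a = a \<otimes> \<phi> g \<longleftrightarrow> (a \<otimes> h) \<otimes> g = g \<otimes> (a \<otimes> h)" if "a \<in> carrier G" for a
      using inv_solve_right[of "g \<otimes> a" "a \<otimes> h \<otimes> g" h] that g h by (auto simp: m_assoc)
    then have "bij_betw (\<lambda>a. a \<otimes> h) {a \<in> carrier G. g \<otimes> a = a \<otimes> \<phi> g}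
        {s \<in> carrier G. s \<otimes> g = g \<otimes> s}"
      using h by (intro bij_betwI[where g = "\<lambda>s. s \<otimes> inv h"]) (auto simp: m_assoc)
    then show ?thesis
      using True invariants stabilizer by (simp add: bij_betw_same_card)
  next
    case False
    have "g \<otimes> a \<noteq> a \<otimes> \<phi> g" if "a \<in> carrier G" for a
    proof
      assume "g \<otimes> a = a \<otimes> \<phi> g"
      then have "\<phi> g = inv a \<otimes> g \<otimes> inv (inv a)"
        using inv_solve_left[of "\<phi> g" a "g \<otimes> a"] that g by (simp add: m_assoc)
      then show False
        using False orbit_conjugation[OF g] that by blast
    qed
    then have "invariants (carrier G) (twisted_conjugation G \<phi>) g = {}"
      using invariants by blast
    then show ?thesis
      using False by simp
  qed
qed

end

locale finite_group_endomorphism = finite_group + group_endomorphism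
begin

lemma card_twisted_conj_classes:
  "card (orbits G (carrier G) (twisted_conjugation G \<phi>)) = card {C \<in> conj_classes G. \<phi> ` C \<subseteq> C}"
proof -
  let ?stab = "\<lambda>g. card (stabilizer G (conjugation G) g)"
  have "card (orbits G (carrier G) (twisted_conjugation G \<phi>)) * order G
      = (\<Sum>g\<in>carrier G. card (invariants (carrier G) (twisted_conjugation G \<phi>) g))"
    using group_action.burnside[OF group_action_twisted_conjugation finite_carrier finite_carrier] .
  also have "\<dots> = (\<Sum>g\<in>carrier G. if \<phi> g \<in> orbit G (conjugation G) g then ?stab g else 0)"
    using card_invariants_twisted_conjugation by simp
  also have "\<dots> = (\<Sum>C\<in>conj_classes G. \<Sum>g\<in>C. if \<phi> g \<in> orbit G (conjugation G) g then ?stab g else 0)"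
    unfolding conj_classes_def
    by (rule group_action.disjoint_sum[OF group_action_conjugation finite_carrier, symmetric])
  also have "\<dots> = (\<Sum>C\<in>conj_classes G. if \<phi> ` C \<subseteq> C then \<Sum>g\<in>C. ?stab g else 0)"
  proof (rule sum.cong[OF refl])
    fix C assume C: "C \<in> conj_classes G"
    have "(if \<phi> g \<in> orbit G (conjugation G) g then ?stab g else 0) = (if \<phi> ` C \<subseteq> C then ?stab g else 0)"
      if "g \<in> C" for g
      using conj_class_eq_orbit[OF C that] endo_maps_conj_class_iff[OF C that] by simp
    then show "(\<Sum>g\<in>C. if \<phi> g \<in> orbit G (conjugation G) g then ?stab g else 0)
        = (if \<phi> ` C \<subseteq> C then \<Sum>g\<in>C. ?stab g else 0)"
      by simp
  qed
  also have "\<dots> = (\<Sum>C\<in>conj_classes G. if \<phi> ` C \<subseteq> C then order G else 0)"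
    using group_action.card_stablizer_sum[OF group_action_conjugation finite_carrier]
    unfolding conj_classes_def by (intro sum.cong) simp_all
  also have "\<dots> = card {C \<in> conj_classes G. \<phi> ` C \<subseteq> C} * order G"
    using finite_conj_classes by (simp add: sum.If_cases Collect_conj_eq Int_commute)
  finally show ?thesis
    using finite_carrier order_gt_0_iff_finite by simp
qed

lemma diagonal_coefficient_precomp:
  assumes C: "C \<in> conj_classes G"
  shows "fun_vs.representation (indicator ` conj_classes G) (precomp G \<phi> (indicator C)) (indicator C)
       = of_bool (\<phi> ` C \<subseteq> C)"
proof -
  obtain x where x: "x \<in> C"
    using conj_class_nonempty[OF C] by blast
  then have "x \<in> carrier G"
    using conj_class_subset_carrier[OF C] by blast
  have "fun_vs.representation (indicator ` conj_classes G) (precomp G \<phi> (indicator C)) (indicator C)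
      = precomp G \<phi> (indicator C) x"
    using precomp_in_class_functions[OF indicator_conj_class_in_class_functions[OF C]] C x
    by (rule representation_conj_class_indicators)
  also have "\<dots> = of_bool (\<phi> x \<in> C)"
    using \<open>x \<in> carrier G\<close> by (simp add: precomp_def indicator_def)
  finally show ?thesis
    using endo_maps_conj_class_iff[OF C x] by simp
qed

lemma lin_trace_precomp:
  "lin_trace (class_functions G) (precomp G \<phi>) = of_nat (card {C \<in> conj_classes G. \<phi> ` C \<subseteq> C})"
proof -
  have "lin_trace (class_functions G) (precomp G \<phi>)
      = (\<Sum>u\<in>indicator ` conj_classes G. fun_vs.representation (indicator ` conj_classes G) (precomp G \<phi> u) u)"
    by (rule lin_trace_eq_sum_representation[OF basis_conj_class_indicators])
      (simp_all add: finite_conj_classes precomp_add precomp_cscale precomp_in_class_functions)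
  also have "\<dots> = (\<Sum>C\<in>conj_classes G. of_bool (\<phi> ` C \<subseteq> C))"
    by (simp add: sum.reindex[OF inj_on_indicator] diagonal_coefficient_precomp)
  also have "\<dots> = of_nat (card {C \<in> conj_classes G. \<phi> ` C \<subseteq> C})"
    using finite_conj_classes by (simp add: Collect_conj_eq Int_commute)
  finally show ?thesis .
qed

end

theorem theorem4:
  fixes G :: "('a, 'b) monoid_scheme" and \<phi> :: "'a \<Rightarrow> 'a"
  assumes "group G" and "finite (carrier G)" and "\<phi> \<in> hom G G"
  shows "of_nat (reidemeister_number G \<phi>) = lin_trace (class_functions G) (precomp G \<phi>)"
proof -
  interpret finite_group_endomorphism G \<phi>
    using assms
    by (simp add: finite_group_endomorphism_def finite_group_def finite_group_axioms_def
        group_endomorphism_def group_endomorphism_axioms_def)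
  show ?thesis
    unfolding reidemeister_number_def quotient_twisted_conj_rel card_twisted_conj_classes lin_trace_precomp ..
qed

end
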